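(* Let $V$ be a complex vector space of dimension $n$ and let $K\subseteq\bigwedge^2V$ be a subspace of dimension $2n-3$ such that $\mathbf{P}(K^\perp)\cap\mathrm{Gr}_2(V^\vee)\neq\emptyset$. Then $\dim W_q(V,K)\geq q+1$ for all $q\geq 0$.
   Context: $K^\perp\subseteq\bigwedge^2V^\vee$ is the annihilator of $K$, and $\mathrm{Gr}_2(V^\vee)\subseteq\mathbf{P}(\bigwedge^2V^\vee)$ is the Plücker embedding. $W_q(V,K)$ is the middle cohomology of $K\otimes\operatorname{Sym}^qV\to V\otimes\operatorname{Sym}^{q+1}V\to\operatorname{Sym}^{q+2}V$, with the first map the restriction of the Koszul differential $v_1\wedge v_2\otimes f\mapsto v_2\otimes v_1f-v_1\otimes v_2f$ and the second multiplication. *)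

theory Defs
  imports Complex_Main "HOL-Library.Function_Algebras"
begin

text \<open>Coordinates: V = C^n with basis e_0..e_(n-1); Sym^q V = homogeneous polynomials of
degree q in x_0..x_(n-1), stored as coefficient functions on exponent vectors.\<close>

definition scaleF :: "complex \<Rightarrow> ('a \<Rightarrow> complex) \<Rightarrow> ('a \<Rightarrow> complex)" where
  "scaleF c f = (\<lambda>x. c * f x)"

definition dimC :: "('a \<Rightarrow> complex) set \<Rightarrow> nat" where
  "dimC S = vector_space.dim scaleF S"

definition subspC :: "('a \<Rightarrow> complex) set \<Rightarrow> bool" where
  "subspC S = module.subspace scaleF S"

definition mons :: "nat \<Rightarrow> nat \<Rightarrow> (nat \<Rightarrow> nat) set" where
  "mons n q = {\<alpha>. (\<forall>i\<ge>n. \<alpha> i = 0) \<and> (\<Sum>i<n. \<alpha> i) = q}"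

text \<open>wedge^2 V: coordinates k(i,j) w.r.t. e_i \<and> e_j, i<j<n\<close>
definition wedge2 :: "nat \<Rightarrow> (nat \<times> nat \<Rightarrow> complex) set" where
  "wedge2 n = {k. \<forall>i j. \<not> (i < j \<and> j < n) \<longrightarrow> k (i, j) = 0}"

text \<open>V (x) Sym^q V: coordinates u(l,alpha) w.r.t. e_l (x) x^alpha\<close>
definition VSym :: "nat \<Rightarrow> nat \<Rightarrow> (nat \<times> (nat \<Rightarrow> nat) \<Rightarrow> complex) set" where
  "VSym n q = {u. \<forall>l \<alpha>. \<not> (l < n \<and> \<alpha> \<in> mons n q) \<longrightarrow> u (l, \<alpha>) = 0}"

text \<open>K (x) Sym^q V inside wedge^2 V (x) Sym^q V: coordinates t((i,j),alpha)\<close>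
definition KSym :: "nat \<Rightarrow> (nat \<times> nat \<Rightarrow> complex) set \<Rightarrow> nat \<Rightarrow>
    ((nat \<times> nat) \<times> (nat \<Rightarrow> nat) \<Rightarrow> complex) set" where
  "KSym n K q = {t. (\<forall>ij \<alpha>. \<alpha> \<notin> mons n q \<longrightarrow> t (ij, \<alpha>) = 0) \<and>
                     (\<forall>\<alpha>. (\<lambda>ij. t (ij, \<alpha>)) \<in> K)}"

text \<open>multiplication of a polynomial by the variable x_i\<close>
definition mulx :: "nat \<Rightarrow> ((nat \<Rightarrow> nat) \<Rightarrow> complex) \<Rightarrow> ((nat \<Rightarrow> nat) \<Rightarrow> complex)" where
  "mulx i f = (\<lambda>\<beta>. if 0 < \<beta> i then f (\<beta>(i := \<beta> i - 1)) else 0)"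

text \<open>Koszul differential: e_i \<and> e_j (x) f  \<mapsto>  e_j (x) x_i f - e_i (x) x_j f\<close>
definition koszul :: "nat \<Rightarrow> ((nat \<times> nat) \<times> (nat \<Rightarrow> nat) \<Rightarrow> complex) \<Rightarrow>
    (nat \<times> (nat \<Rightarrow> nat) \<Rightarrow> complex)" where
  "koszul n t = (\<lambda>(l, \<beta>). \<Sum>i<n. mulx i (\<lambda>\<alpha>. t ((i, l), \<alpha>) - t ((l, i), \<alpha>)) \<beta>)"

text \<open>multiplication V (x) Sym^(q+1) V \<rightarrow> Sym^(q+2) V\<close>
definition multV :: "nat \<Rightarrow> (nat \<times> (nat \<Rightarrow> nat) \<Rightarrow> complex) \<Rightarrow> ((nat \<Rightarrow> nat) \<Rightarrow> complex)" where
  "multV n u = (\<lambda>\<beta>. \<Sum>l<n. mulx l (\<lambda>\<alpha>. u (l, \<alpha>)) \<beta>)"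

definition dimW :: "nat \<Rightarrow> (nat \<times> nat \<Rightarrow> complex) set \<Rightarrow> nat \<Rightarrow> nat" where
  "dimW n K q = dimC {u \<in> VSym n (q + 1). multV n u = 0} - dimC (koszul n ` KSym n K q)"

text \<open>pairing of phi \<and> psi (phi, psi in V^dual) with k in wedge^2 V\<close>
definition pair2 :: "nat \<Rightarrow> (nat \<Rightarrow> complex) \<Rightarrow> (nat \<Rightarrow> complex) \<Rightarrow> (nat \<times> nat \<Rightarrow> complex) \<Rightarrow> complex" where
  "pair2 n \<phi> \<psi> k = (\<Sum>j<n. \<Sum>i<j. k (i, j) * (\<phi> i * \<psi> j - \<phi> j * \<psi> i))"

definition lin_indep2 :: "nat \<Rightarrow> (nat \<Rightarrow> complex) \<Rightarrow> (nat \<Rightarrow> complex) \<Rightarrow> bool" where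
  "lin_indep2 n \<phi> \<psi> = (\<forall>a b. (\<forall>i<n. a * \<phi> i + b * \<psi> i = 0) \<longrightarrow> a = 0 \<and> b = 0)"

text \<open>P(K^perp) meets Gr_2(V^dual): some nonzero decomposable phi \<and> psi annihilates K\<close>
definition meets_Gr2 :: "nat \<Rightarrow> (nat \<times> nat \<Rightarrow> complex) set \<Rightarrow> bool" where
  "meets_Gr2 n K = (\<exists>\<phi> \<psi>. lin_indep2 n \<phi> \<psi> \<and> (\<forall>k\<in>K. pair2 n \<phi> \<psi> k = 0))"

end

theory Submission
  imports Defs "HOL-Computational_Algebra.Polynomial" "HOL-Library.FuncSet"
begin

(* After a change of basis of the pencil, the decomposable form annihilating K is
   \<phi> \<and> \<psi> with \<phi>(e_i) = \<psi>(e_j) = 1 and \<phi>(e_j) = \<psi>(e_i) = 0.  Contracting the V factor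
   with \<psi> and restricting the Sym factor to the line \<phi> + t \<psi> in V^dual gives a linear map
   V (x) Sym^(q+1) V \<rightarrow> C[t] that sends the Koszul image of k (x) f to (\<phi> \<and> \<psi>)(k) f(\<phi> + t \<psi>),
   so it kills the image of K (x) Sym^q V.  It sends the cycles that are Koszul images of
   e_i \<and> e_j (x) x_i^(q-c) x_j^c, c = 0..q, to t^c; hence these are linearly independent modulo
   that image. *)

interpretation vs: vector_space "scaleF :: complex \<Rightarrow> ('a \<Rightarrow> complex) \<Rightarrow> _"
  by unfold_locales (auto simp: scaleF_def fun_eq_iff algebra_simps)

lemma sum_fun_apply: "(\<Sum>a\<in>A. f a) y = (\<Sum>a\<in>A. f a y)"
  by (induct A rule: infinite_finite_induct) auto

lemma card_le_dimC_of_independent: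
  assumes "V \<subseteq> vs.span S" "finite S" "T \<subseteq> V" "vs.independent T"
  shows "card T \<le> dimC V"
proof -
  obtain B where B: "B \<subseteq> V" "vs.independent B" "V \<subseteq> vs.span B" "card B = dimC V"
    using vs.basis_exists[of V] unfolding dimC_def by blast
  have "finite B"
    using vs.independent_span_bound[OF \<open>finite S\<close> \<open>vs.independent B\<close>] B(1) assms(1) by blast
  thus ?thesis
    using vs.independent_span_bound[OF _ \<open>vs.independent T\<close>] B(3,4) assms(3) by fastforce
qed

lemma dimC_add_le_of_poly_map:
  fixes U V S :: "('a \<Rightarrow> complex) set" and P :: "('a \<Rightarrow> complex) \<Rightarrow> complex poly"
    and u :: "nat \<Rightarrow> ('a \<Rightarrow> complex)"
  assumes "V \<subseteq> vs.span S" "finite S" "U \<subseteq> V"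
    and P_add: "\<And>x y. P (x + y) = P x + P y"
    and P_scale: "\<And>a x. P (scaleF a x) = smult a (P x)"
    and P_U: "\<And>v. v \<in> U \<Longrightarrow> P v = 0"
    and u_V: "\<And>c. c \<le> q \<Longrightarrow> u c \<in> V"
    and P_u: "\<And>c. c \<le> q \<Longrightarrow> P (u c) = monom 1 c"
  shows "dimC U + (q + 1) \<le> dimC V"
proof -
  obtain B where B: "B \<subseteq> U" "vs.independent B" "card B = dimC U"
    using vs.basis_exists[of U] unfolding dimC_def by metis
  have "finite B"
    using vs.independent_span_bound[OF \<open>finite S\<close> \<open>vs.independent B\<close>] B(1) assms(1,3) by blast
  have extend: "vs.independent (B \<union> u ` {..<c}) \<and> card (B \<union> u ` {..<c}) = card B + c"
    if "c \<le> q + 1" for c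
    using that
  proof (induction c)
    case 0
    thus ?case using B by simp
  next
    case (Suc c)
    let ?T = "B \<union> u ` {..<c}"
    have "c \<le> q" using Suc.prems by simp
    have "?T \<subseteq> {v. coeff (P v) c = 0}"
      using B(1) P_U P_u \<open>c \<le> q\<close> by auto
    moreover have "vs.subspace {v. coeff (P v) c = 0}"
      by (rule vs.subspaceI) (use P_add P_scale[of 0 0] in \<open>auto simp: P_scale\<close>)
    ultimately have "vs.span ?T \<subseteq> {v. coeff (P v) c = 0}"
      by (rule vs.span_minimal)
    moreover have "coeff (P (u c)) c = 1" using P_u[OF \<open>c \<le> q\<close>] by simp
    ultimately have new: "u c \<notin> vs.span ?T" by force
    hence "u c \<notin> ?T" using vs.span_base by metis
    moreover have "vs.independent ?T" "card ?T = card B + c" using Suc by simp_all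
    moreover have "B \<union> u ` {..<Suc c} = insert (u c) ?T" by (auto simp: lessThan_Suc)
    ultimately show ?case
      using vs.independent_insertI[OF new] \<open>finite B\<close> by simp
  qed
  have "B \<union> u ` {..<q + 1} \<subseteq> V" using B(1) assms(3) u_V by auto
  with extend[OF order_refl] have "card B + (q + 1) \<le> dimC V"
    using card_le_dimC_of_independent[OF assms(1,2)] by metis
  thus ?thesis using B(3) by simp
qed

lemma finite_mons: "finite (mons n q)"
proof -
  have "mons n q \<subseteq> (\<lambda>f i. if i < n then f i else 0) ` ({..<n} \<rightarrow>\<^sub>E {..q})"
  proof
    fix \<alpha> assume \<alpha>: "\<alpha> \<in> mons n q"
    have "\<alpha> i \<le> q" if "i < n" for i
      using \<alpha> member_le_sum[of i "{..<n}" \<alpha>] that by (simp add: mons_def)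
    hence "restrict \<alpha> {..<n} \<in> {..<n} \<rightarrow>\<^sub>E {..q}" by auto
    moreover have "\<alpha> = (\<lambda>i. if i < n then restrict \<alpha> {..<n} i else 0)"
      using \<alpha> by (auto simp: mons_def fun_eq_iff)
    ultimately show "\<alpha> \<in> (\<lambda>f i. if i < n then f i else 0) ` ({..<n} \<rightarrow>\<^sub>E {..q})" by blast
  qed
  thus ?thesis by (rule finite_subset) (intro finite_imageI finite_PiE; simp)
qed

lemma VSym_subset_span:
  "VSym n q \<subseteq> vs.span ((\<lambda>p x. if x = p then 1 else 0) ` ({..<n} \<times> mons n q))"
proof
  fix u assume u: "u \<in> VSym n q"
  let ?F = "{..<n} \<times> mons n q"
  let ?\<delta> = "\<lambda>p x. if x = p then 1 else 0 :: complex"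
  have "u = (\<Sum>p\<in>?F. scaleF (u p) (?\<delta> p))"
  proof
    fix x
    have "(\<Sum>p\<in>?F. scaleF (u p) (?\<delta> p)) x = (if x \<in> ?F then u x else 0)"
      by (simp add: sum_fun_apply scaleF_def finite_mons if_distrib[of "\<lambda>x. _ * x"] sum.delta cong: if_cong)
    also have "\<dots> = u x" using u unfolding VSym_def by (cases x) auto
    finally show "u x = (\<Sum>p\<in>?F. scaleF (u p) (?\<delta> p)) x" ..
  qed
  also have "\<dots> \<in> vs.span (?\<delta> ` ?F)"
    by (intro vs.span_sum vs.span_scale vs.span_base) auto
  finally show "u \<in> vs.span (?\<delta> ` ?F)" .
qed

lemma sum_fun_upd:
  fixes f :: "'a \<Rightarrow> 'b :: comm_monoid_add"
  assumes "finite A" "i \<in> A"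
  shows "sum (f(i := x)) A + f i = sum f A + x"
proof -
  have "sum (f(i := x)) (A - {i}) = sum f (A - {i})" by (rule sum.cong) auto
  thus ?thesis using assms by (simp add: sum.remove[of A i] add_ac)
qed

lemma fun_upd_Suc_in_mons_iff:
  assumes "i < n"
  shows "\<alpha>(i := Suc (\<alpha> i)) \<in> mons n (Suc q) \<longleftrightarrow> \<alpha> \<in> mons n q"
  using sum_fun_upd[of "{..<n}" i \<alpha> "Suc (\<alpha> i)"] assms by (auto simp: mons_def)

lemma fun_upd_pred_in_mons_iff:
  assumes "i < n" "0 < \<beta> i"
  shows "\<beta>(i := \<beta> i - 1) \<in> mons n q \<longleftrightarrow> \<beta> \<in> mons n (Suc q)"
  using fun_upd_Suc_in_mons_iff[of i n "\<beta>(i := \<beta> i - 1)" q] assms by simp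

lemma mulx_sum: "mulx i (\<lambda>\<alpha>. \<Sum>x\<in>X. f x \<alpha>) = (\<lambda>\<beta>. \<Sum>x\<in>X. mulx i (f x) \<beta>)"
  by (simp add: mulx_def fun_eq_iff)

lemma mulx_diff: "mulx i (\<lambda>\<alpha>. f \<alpha> - g \<alpha>) \<beta> = mulx i f \<beta> - mulx i g \<beta>"
  by (simp add: mulx_def)

lemma mulx_commute: "mulx l (mulx i f) = mulx i (mulx l f)"
  by (cases "l = i") (auto simp: mulx_def fun_eq_iff fun_upd_twist)

lemma multV_koszul: "multV n (koszul n t) = 0"
proof
  fix \<beta>
  define F where "F = (\<lambda>l i. mulx l (mulx i (\<lambda>\<alpha>. t ((i, l), \<alpha>))) \<beta>)"
  have "multV n (koszul n t) \<beta> = (\<Sum>l<n. \<Sum>i<n. F l i - F i l)"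
    unfolding multV_def koszul_def F_def
    by (simp add: mulx_sum mulx_diff mulx_commute[of _ i for i])
  also have "\<dots> = 0"
    by (simp add: sum_subtractf sum.swap[of "\<lambda>l i. F i l"])
  finally show "multV n (koszul n t) \<beta> = 0 \<beta>" by simp
qed

lemma koszul_in_VSym:
  assumes "t \<in> KSym n (wedge2 n) q"
  shows "koszul n t \<in> VSym n (Suc q)"
  unfolding VSym_def
proof (intro CollectI allI impI)
  fix l \<beta> assume l\<beta>: "\<not> (l < n \<and> \<beta> \<in> mons n (Suc q))"
  have "mulx i (\<lambda>\<alpha>. t ((i, l), \<alpha>) - t ((l, i), \<alpha>)) \<beta> = 0" if "i < n" for i
  proof (cases "l < n")
    case True
    with l\<beta> have "0 < \<beta> i \<Longrightarrow> \<beta>(i := \<beta> i - 1) \<notin> mons n q"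
      using fun_upd_pred_in_mons_iff[OF \<open>i < n\<close>] by blast
    thus ?thesis using assms by (simp add: mulx_def KSym_def)
  next
    case False
    thus ?thesis using assms \<open>i < n\<close> by (simp add: mulx_def KSym_def wedge2_def)
  qed
  thus "koszul n t (l, \<beta>) = 0" unfolding koszul_def by simp
qed

lemma pair2_lincomb:
  "pair2 n (\<lambda>m. a * \<phi> m + b * \<psi> m) (\<lambda>m. c * \<phi> m + d * \<psi> m) k = (a * d - b * c) * pair2 n \<phi> \<psi> k"
proof -
  have "(a * \<phi> i + b * \<psi> i) * (c * \<phi> j + d * \<psi> j) - (a * \<phi> j + b * \<psi> j) * (c * \<phi> i + d * \<psi> i)
      = (a * d - b * c) * (\<phi> i * \<psi> j - \<phi> j * \<psi> i)" for i j
    by algebra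
  thus ?thesis unfolding pair2_def by (simp add: sum_distrib_left algebra_simps)
qed

lemma lin_indep2_minor_nonzero:
  assumes "lin_indep2 n \<phi> \<psi>"
  obtains i j where "i < j" "j < n" "\<phi> i * \<psi> j - \<phi> j * \<psi> i \<noteq> 0"
proof -
  have "\<exists>a<n. \<exists>b<n. \<phi> a * \<psi> b \<noteq> \<phi> b * \<psi> a"
  proof (rule ccontr)
    assume "\<not> ?thesis"
    hence minors: "\<And>a b. a < n \<Longrightarrow> b < n \<Longrightarrow> \<phi> a * \<psi> b = \<phi> b * \<psi> a" by blast
    show False
    proof (cases "\<forall>i<n. \<phi> i = 0")
      case True
      thus False using assms[unfolded lin_indep2_def, rule_format, of 1 0] by simp
    next
      case False
      then obtain i where "i < n" "\<phi> i \<noteq> 0" by blast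
      have "\<forall>m<n. \<psi> i * \<phi> m + (- \<phi> i) * \<psi> m = 0"
        using minors[OF \<open>i < n\<close>] by (simp add: mult.commute)
      thus False using assms[unfolded lin_indep2_def, rule_format, of "\<psi> i" "- \<phi> i"] \<open>\<phi> i \<noteq> 0\<close>
        by simp
    qed
  qed
  then obtain a b where "a < n" "b < n" "\<phi> a * \<psi> b \<noteq> \<phi> b * \<psi> a" by blast
  thus ?thesis
    using that[of a b] that[of b a] by (cases a b rule: linorder_cases) (auto simp: mult.commute)
qed

lemma meets_Gr2_normalized:
  assumes "meets_Gr2 n K"
  obtains \<phi> \<psi> i j where "i < j" "j < n" "\<phi> i = 1" "\<phi> j = 0" "\<psi> i = 0" "\<psi> j = 1"
    "\<And>k. k \<in> K \<Longrightarrow> pair2 n \<phi> \<psi> k = 0"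
proof -
  obtain \<phi> \<psi> where "lin_indep2 n \<phi> \<psi>" and K_perp: "\<And>k. k \<in> K \<Longrightarrow> pair2 n \<phi> \<psi> k = 0"
    using assms unfolding meets_Gr2_def by blast
  obtain i j where "i < j" "j < n" and "\<phi> i * \<psi> j - \<phi> j * \<psi> i \<noteq> 0"
    using lin_indep2_minor_nonzero[OF \<open>lin_indep2 n \<phi> \<psi>\<close>] by blast
  define \<Delta> where "\<Delta> = \<phi> i * \<psi> j - \<phi> j * \<psi> i"
  have "\<Delta> \<noteq> 0" using \<open>\<phi> i * \<psi> j - \<phi> j * \<psi> i \<noteq> 0\<close> by (simp add: \<Delta>_def)
  \<comment> \<open>transform (\<phi>, \<psi>) by the inverse of the matrix of their values at e_i, e_j\<close>
  define \<phi>' where "\<phi>' = (\<lambda>m. \<psi> j / \<Delta> * \<phi> m + (- \<phi> j / \<Delta>) * \<psi> m)"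
  define \<psi>' where "\<psi>' = (\<lambda>m. (- \<psi> i / \<Delta>) * \<phi> m + \<phi> i / \<Delta> * \<psi> m)"
  have "pair2 n \<phi>' \<psi>' k = pair2 n \<phi> \<psi> k / \<Delta>" for k
  proof -
    have "\<psi> j / \<Delta> * (\<phi> i / \<Delta>) - - \<phi> j / \<Delta> * (- \<psi> i / \<Delta>) = \<Delta> / (\<Delta> * \<Delta>)"
      by (simp add: times_divide_times_eq diff_divide_distrib \<Delta>_def mult.commute)
    thus ?thesis unfolding \<phi>'_def \<psi>'_def pair2_lincomb using \<open>\<Delta> \<noteq> 0\<close> by simp
  qed
  moreover have "\<phi>' i = 1" "\<phi>' j = 0" "\<psi>' i = 0" "\<psi>' j = 1"
    using \<open>\<Delta> \<noteq> 0\<close> unfolding \<phi>'_def \<psi>'_def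
    by (simp_all add: field_simps) (simp_all add: \<Delta>_def algebra_simps)
  ultimately show ?thesis using that[of i j \<phi>' \<psi>'] \<open>i < j\<close> \<open>j < n\<close> K_perp by simp
qed

(* Restriction to the line \<phi> + t \<psi> in V^dual, as polynomials in t: line_mon n \<phi> \<psi> \<beta> is the
   monomial x^\<beta>, line_poly the form of degree d with coefficients f, and line_contract
   moreover contracts the V factor with \<psi>. *)
definition line_mon :: "nat \<Rightarrow> (nat \<Rightarrow> complex) \<Rightarrow> (nat \<Rightarrow> complex) \<Rightarrow> (nat \<Rightarrow> nat) \<Rightarrow> complex poly"
  where "line_mon n \<phi> \<psi> \<beta> = (\<Prod>m<n. [:\<phi> m, \<psi> m:] ^ \<beta> m)"

definition line_poly :: "nat \<Rightarrow> nat \<Rightarrow> (nat \<Rightarrow> complex) \<Rightarrow> (nat \<Rightarrow> complex) \<Rightarrow>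
    ((nat \<Rightarrow> nat) \<Rightarrow> complex) \<Rightarrow> complex poly"
  where "line_poly n d \<phi> \<psi> f = (\<Sum>\<beta>\<in>mons n d. smult (f \<beta>) (line_mon n \<phi> \<psi> \<beta>))"

definition line_contract :: "nat \<Rightarrow> nat \<Rightarrow> (nat \<Rightarrow> complex) \<Rightarrow> (nat \<Rightarrow> complex) \<Rightarrow>
    (nat \<times> (nat \<Rightarrow> nat) \<Rightarrow> complex) \<Rightarrow> complex poly"
  where "line_contract n d \<phi> \<psi> u = (\<Sum>l<n. smult (\<psi> l) (line_poly n d \<phi> \<psi> (\<lambda>\<beta>. u (l, \<beta>))))"

lemma smult_sum_right: "smult a (\<Sum>x\<in>A. f x) = (\<Sum>x\<in>A. smult a (f x))"
  by (induct A rule: infinite_finite_induct) (simp_all add: smult_add_right)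

lemma line_mon_fun_upd_Suc:
  assumes "i < n"
  shows "line_mon n \<phi> \<psi> (\<alpha>(i := Suc (\<alpha> i))) = [:\<phi> i, \<psi> i:] * line_mon n \<phi> \<psi> \<alpha>"
proof -
  let ?p = "\<lambda>\<gamma> m. [:\<phi> m, \<psi> m:] ^ \<gamma> m"
  have split: "line_mon n \<phi> \<psi> \<gamma> = ?p \<gamma> i * (\<Prod>m\<in>{..<n} - {i}. ?p \<gamma> m)" for \<gamma>
    unfolding line_mon_def using assms by (simp add: prod.remove)
  have "(\<Prod>m\<in>{..<n} - {i}. ?p (\<alpha>(i := Suc (\<alpha> i))) m) = (\<Prod>m\<in>{..<n} - {i}. ?p \<alpha> m)"
    by (rule prod.cong) auto
  thus ?thesis unfolding split by (simp only: fun_upd_same power_Suc mult.assoc)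
qed

lemma line_poly_sum:
  "line_poly n d \<phi> \<psi> (\<lambda>\<beta>. \<Sum>x\<in>X. f x \<beta>) = (\<Sum>x\<in>X. line_poly n d \<phi> \<psi> (f x))"
  unfolding line_poly_def smult_sum by (rule sum.swap)

lemma line_poly_scale: "line_poly n d \<phi> \<psi> (\<lambda>\<beta>. c * f \<beta>) = smult c (line_poly n d \<phi> \<psi> f)"
  unfolding line_poly_def by (simp add: smult_sum_right)

lemma line_poly_diff:
  "line_poly n d \<phi> \<psi> (\<lambda>\<beta>. f \<beta> - g \<beta>) = line_poly n d \<phi> \<psi> f - line_poly n d \<phi> \<psi> g"
  unfolding line_poly_def by (simp add: smult_diff_left sum_subtractf)

lemma line_poly_mulx:
  assumes "i < n"
  shows "line_poly n (Suc d) \<phi> \<psi> (mulx i f) = [:\<phi> i, \<psi> i:] * line_poly n d \<phi> \<psi> f"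
proof -
  have "line_poly n (Suc d) \<phi> \<psi> (mulx i f)
      = (\<Sum>\<beta>\<in>{\<beta>\<in>mons n (Suc d). 0 < \<beta> i}. smult (f (\<beta>(i := \<beta> i - 1))) (line_mon n \<phi> \<psi> \<beta>))"
    unfolding line_poly_def sum.inter_filter[OF finite_mons]
    by (intro sum.cong refl) (simp add: mulx_def)
  also have "\<dots> = (\<Sum>\<alpha>\<in>mons n d. smult (f \<alpha>) (line_mon n \<phi> \<psi> (\<alpha>(i := Suc (\<alpha> i)))))"
    by (rule sum.reindex_bij_witness[of _ "\<lambda>\<alpha>. \<alpha>(i := Suc (\<alpha> i))" "\<lambda>\<beta>. \<beta>(i := \<beta> i - 1)"])
      (use assms in \<open>auto simp: fun_upd_pred_in_mons_iff[simplified] fun_upd_Suc_in_mons_iff\<close>)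
  also have "\<dots> = [:\<phi> i, \<psi> i:] * line_poly n d \<phi> \<psi> f"
    using assms by (simp add: line_poly_def line_mon_fun_upd_Suc sum_distrib_left)
  finally show ?thesis .
qed

lemma line_contract_add:
  "line_contract n d \<phi> \<psi> (u + v) = line_contract n d \<phi> \<psi> u + line_contract n d \<phi> \<psi> v"
  unfolding line_contract_def line_poly_def
  by (simp add: smult_add_left smult_add_right sum.distrib)

lemma line_contract_scale:
  "line_contract n d \<phi> \<psi> (scaleF a u) = smult a (line_contract n d \<phi> \<psi> u)"
  unfolding line_contract_def scaleF_def line_poly_scale by (simp add: smult_sum_right mult.commute)

lemma pair2_eq_full_sum:
  assumes "k \<in> wedge2 n"
  shows "pair2 n \<phi> \<psi> k = (\<Sum>l<n. \<Sum>i<n. (\<phi> i * \<psi> l - \<phi> l * \<psi> i) * k (i, l))"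
  unfolding pair2_def
proof (rule sum.cong[OF refl])
  fix l assume "l \<in> {..<n}"
  thus "(\<Sum>i<l. k (i, l) * (\<phi> i * \<psi> l - \<phi> l * \<psi> i)) = (\<Sum>i<n. (\<phi> i * \<psi> l - \<phi> l * \<psi> i) * k (i, l))"
    using assms by (intro sum.mono_neutral_cong_left) (auto simp: wedge2_def)
qed

lemma line_contract_koszul:
  assumes "\<And>\<alpha>. (\<lambda>ij. t (ij, \<alpha>)) \<in> wedge2 n"
  shows "line_contract n (Suc q) \<phi> \<psi> (koszul n t) = line_poly n q \<phi> \<psi> (\<lambda>\<alpha>. pair2 n \<phi> \<psi> (\<lambda>ij. t (ij, \<alpha>)))"
proof -
  define R where "R = (\<lambda>i l. line_poly n q \<phi> \<psi> (\<lambda>\<alpha>. t ((i, l), \<alpha>)))"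
  define L where "L = (\<lambda>i. [:\<phi> i, \<psi> i:])"
  have "line_poly n (Suc q) \<phi> \<psi> (\<lambda>\<beta>. koszul n t (l, \<beta>)) = (\<Sum>i<n. L i * (R i l - R l i))" for l
  proof -
    have koszul_l: "(\<lambda>\<beta>. koszul n t (l, \<beta>)) = (\<lambda>\<beta>. \<Sum>i<n. mulx i (\<lambda>\<alpha>. t ((i, l), \<alpha>) - t ((l, i), \<alpha>)) \<beta>)"
      by (simp add: koszul_def)
    show ?thesis
      unfolding koszul_l line_poly_sum by (intro sum.cong refl) (simp add: line_poly_mulx line_poly_diff L_def R_def)
  qed
  hence "line_contract n (Suc q) \<phi> \<psi> (koszul n t) = (\<Sum>l<n. \<Sum>i<n. smult (\<psi> l) (L i * (R i l - R l i)))"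
    by (simp add: line_contract_def smult_sum_right)
  also have "\<dots> = (\<Sum>l<n. \<Sum>i<n. smult (\<psi> l) (L i) * R i l) - (\<Sum>l<n. \<Sum>i<n. smult (\<psi> i) (L l) * R i l)"
    by (simp add: right_diff_distrib smult_diff_right sum_subtractf sum.swap[of "\<lambda>l i. smult (\<psi> l) (L i * R l i)"])
  also have "\<dots> = (\<Sum>l<n. \<Sum>i<n. (smult (\<psi> l) (L i) - smult (\<psi> i) (L l)) * R i l)"
    by (simp only: left_diff_distrib sum_subtractf)
  also have "\<dots> = (\<Sum>l<n. \<Sum>i<n. smult (\<phi> i * \<psi> l - \<phi> l * \<psi> i) (R i l))"
  proof -
    \<comment> \<open>the terms linear in t cancel\<close>
    have "smult (\<psi> l) (L i) - smult (\<psi> i) (L l) = [:\<phi> i * \<psi> l - \<phi> l * \<psi> i:]" for i l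
      by (simp add: L_def algebra_simps)
    thus ?thesis by simp
  qed
  also have "\<dots> = line_poly n q \<phi> \<psi> (\<lambda>\<alpha>. pair2 n \<phi> \<psi> (\<lambda>ij. t (ij, \<alpha>)))"
    by (simp add: pair2_eq_full_sum[OF assms] line_poly_sum line_poly_scale R_def)
  finally show ?thesis .
qed

lemma koszul_in_cycles:
  assumes "t \<in> KSym n (wedge2 n) q"
  shows "koszul n t \<in> {u \<in> VSym n (q + 1). multV n u = 0}"
  using koszul_in_VSym[OF assms] multV_koszul[of n t] by simp

lemma line_contract_koszul_eq_0:
  assumes "K \<subseteq> wedge2 n" "\<And>k. k \<in> K \<Longrightarrow> pair2 n \<phi> \<psi> k = 0" "t \<in> KSym n K q"
  shows "line_contract n (Suc q) \<phi> \<psi> (koszul n t) = 0"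
proof -
  have "(\<lambda>ij. t (ij, \<alpha>)) \<in> K" for \<alpha> using assms(3) by (simp add: KSym_def)
  hence "line_contract n (Suc q) \<phi> \<psi> (koszul n t) = line_poly n q \<phi> \<psi> (\<lambda>\<alpha>. 0)"
    using line_contract_koszul[of t n q \<phi> \<psi>] assms(1,2) by auto
  thus ?thesis by (simp add: line_poly_def)
qed

definition mon2 :: "nat \<Rightarrow> nat \<Rightarrow> nat \<Rightarrow> nat \<Rightarrow> (nat \<Rightarrow> nat)"
  where "mon2 i j a b = (\<lambda>_. 0)(i := a, j := b)"

definition basis_tensor :: "nat \<times> nat \<Rightarrow> (nat \<Rightarrow> nat) \<Rightarrow> ((nat \<times> nat) \<times> (nat \<Rightarrow> nat) \<Rightarrow> complex)"
  where "basis_tensor ij \<alpha> = (\<lambda>p. if p = (ij, \<alpha>) then 1 else 0)"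

lemma mon2_in_mons:
  assumes "i \<noteq> j" "i < n" "j < n"
  shows "mon2 i j a b \<in> mons n (a + b)"
proof -
  have "(\<Sum>m<n. mon2 i j a b m) = (\<Sum>m\<in>{i, j}. mon2 i j a b m)"
    using assms by (intro sum.mono_neutral_right) (auto simp: mon2_def)
  thus ?thesis using assms by (auto simp: mons_def mon2_def)
qed

lemma line_mon_mon2:
  assumes "i \<noteq> j" "i < n" "j < n"
  shows "line_mon n \<phi> \<psi> (mon2 i j a b) = [:\<phi> i, \<psi> i:] ^ a * [:\<phi> j, \<psi> j:] ^ b"
proof -
  have "line_mon n \<phi> \<psi> (mon2 i j a b) = (\<Prod>m\<in>{i, j}. [:\<phi> m, \<psi> m:] ^ mon2 i j a b m)"
    unfolding line_mon_def using assms by (intro prod.mono_neutral_right) (auto simp: mon2_def)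
  thus ?thesis using assms by (simp add: mon2_def)
qed

lemma basis_tensor_in_KSym:
  assumes "i < j" "j < n" "\<alpha> \<in> mons n q"
  shows "basis_tensor (i, j) \<alpha> \<in> KSym n (wedge2 n) q"
  using assms by (auto simp: KSym_def wedge2_def basis_tensor_def)

lemma pair2_basis_vector:
  assumes "i < j" "j < n"
  shows "pair2 n \<phi> \<psi> (\<lambda>p. if p = (i, j) then c else 0) = c * (\<phi> i * \<psi> j - \<phi> j * \<psi> i)"
proof -
  have "(\<Sum>i'<l. (if (i', l) = (i, j) then c else 0) * (\<phi> i' * \<psi> l - \<phi> l * \<psi> i'))
      = (if l = j then c * (\<phi> i * \<psi> j - \<phi> j * \<psi> i) else 0)" for l
    using assms(1) by (cases "l = j") (simp_all add: if_distrib[of "\<lambda>x. x * _"] sum.delta cong: if_cong)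
  thus ?thesis using assms(2) by (simp add: pair2_def sum.delta)
qed

lemma line_contract_koszul_basis_tensor:
  assumes "i < j" "j < n" "\<alpha> \<in> mons n q"
  shows "line_contract n (Suc q) \<phi> \<psi> (koszul n (basis_tensor (i, j) \<alpha>))
    = smult (\<phi> i * \<psi> j - \<phi> j * \<psi> i) (line_mon n \<phi> \<psi> \<alpha>)"
proof -
  have "(\<lambda>ij. basis_tensor (i, j) \<alpha> (ij, \<beta>)) = (\<lambda>p. if p = (i, j) then if \<beta> = \<alpha> then 1 else 0 else 0)"
    for \<beta>
    by (auto simp: basis_tensor_def fun_eq_iff)
  moreover have "(\<lambda>ij. basis_tensor (i, j) \<alpha> (ij, \<beta>)) \<in> wedge2 n" for \<beta>
    using basis_tensor_in_KSym[OF assms] by (simp add: KSym_def)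
  ultimately have "line_contract n (Suc q) \<phi> \<psi> (koszul n (basis_tensor (i, j) \<alpha>))
      = line_poly n q \<phi> \<psi> (\<lambda>\<beta>. if \<beta> = \<alpha> then \<phi> i * \<psi> j - \<phi> j * \<psi> i else 0)"
    by (simp add: line_contract_koszul pair2_basis_vector[OF assms(1,2)] if_distrib[of "\<lambda>x. x * _"] cong: if_cong)
  also have "\<dots> = smult (\<phi> i * \<psi> j - \<phi> j * \<psi> i) (line_mon n \<phi> \<psi> \<alpha>)"
    using assms(3) finite_mons by (simp add: line_poly_def if_distrib[of "\<lambda>c. smult c _"] sum.delta cong: if_cong)
  finally show ?thesis .
qed

theorem lemma3p3:
  fixes n q :: nat and K :: "(nat \<times> nat \<Rightarrow> complex) set"
  assumes "K \<subseteq> wedge2 n" and "subspC K" and "dimC K + 3 = 2 * n"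
    and "meets_Gr2 n K"
  shows "q + 1 \<le> dimW n K q"
proof -
  obtain \<phi> \<psi> i j where "i < j" "j < n" "\<phi> i = 1" "\<phi> j = 0" "\<psi> i = 0" "\<psi> j = 1"
    and K_perp: "\<And>k. k \<in> K \<Longrightarrow> pair2 n \<phi> \<psi> k = 0"
    using meets_Gr2_normalized[OF assms(4)] by metis
  let ?Z = "{u \<in> VSym n (q + 1). multV n u = 0}"
  let ?u = "\<lambda>c. koszul n (basis_tensor (i, j) (mon2 i j (q - c) c))"
  have u_mons: "mon2 i j (q - c) c \<in> mons n q" if "c \<le> q" for c
    using mon2_in_mons[of i j n "q - c" c] \<open>i < j\<close> \<open>j < n\<close> that by simp
  have "dimC (koszul n ` KSym n K q) + (q + 1) \<le> dimC ?Z"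
  proof (rule dimC_add_le_of_poly_map)
    show "?Z \<subseteq> vs.span ((\<lambda>p x. if x = p then 1 else 0) ` ({..<n} \<times> mons n (q + 1)))"
      using VSym_subset_span by blast
    have "KSym n K q \<subseteq> KSym n (wedge2 n) q" using assms(1) by (auto simp: KSym_def)
    thus "koszul n ` KSym n K q \<subseteq> ?Z"
      using koszul_in_cycles by blast
    show "line_contract n (Suc q) \<phi> \<psi> v = 0" if "v \<in> koszul n ` KSym n K q" for v
      using that line_contract_koszul_eq_0[OF assms(1) K_perp] by blast
    show "?u c \<in> ?Z" if "c \<le> q" for c
      by (intro koszul_in_cycles basis_tensor_in_KSym \<open>i < j\<close> \<open>j < n\<close> u_mons that)
    show "line_contract n (Suc q) \<phi> \<psi> (?u c) = monom 1 c" if "c \<le> q" for c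
      using \<open>i < j\<close> \<open>j < n\<close> \<open>\<phi> i = 1\<close> \<open>\<phi> j = 0\<close> \<open>\<psi> i = 0\<close> \<open>\<psi> j = 1\<close>
      by (simp add: line_contract_koszul_basis_tensor u_mons[OF that] line_mon_mon2 monom_altdef pCons_one)
  qed (simp_all add: finite_mons line_contract_add line_contract_scale)
  thus ?thesis unfolding dimW_def by simp
qed

end
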